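(* Fix a cell with energy $E>0$ carried by an initial finite population of particles with positive weights summing to $E$, a source energy $S>0$, and a positive integer $N_{obj}$, and suppose that $\frac{S N_{obj}}{E+S}\in\mathbb{N}$ and that $N^{vol}>1$, where $w_{obj}=(E+S)/N_{obj}$ and $N^{vol}=\max(1,\lfloor S/w_{obj}\rfloor)$. Consider the following iterative procedure on two populations: the $N^{vol}$ volumic (emitted) particles each have weight $S/N^{vol}$ and are never modified; at each iteration $l$, the current non-volumic population of $N^{ini}_l$ particles undergoes Russian Roulette and non-conservative Splitting with target weight $w_{obj}$ (as described in the context, with fresh independent uniform random variables), after which the non-volumic particles are rescaled by a common factor so that the total mass of all particles (volumic and non-volumic) equals $E+S$ (if no non-volumic particle survives, they are replaced by a single particle of weight $E$). Let $N^l=N^{vol}+N^{ini}_l$ be the number of particles at iteration $l$. Then $\lim_{l\to\infty}\mathbb{P}[N^l=N_{obj}]=1$; more precisely, there exists $\lambda>0$ such that $\mathbb{P}(N^l\neq N_{obj})\le e^{-l\lambda}$.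
   Context: Russian Roulette and non-conservative Splitting with target weight $w_{obj}>0$ applied to a population of particles with positive weights: for each particle $p$ of weight $w_p$ draw independently $u_p\sim\mathcal U(0,1)$, set $I_p=\lfloor w_p/w_{obj}\rfloor$, $R_p=w_p/w_{obj}-I_p$. If $I_p=0$, the particle is killed if $R_p<u_p$ and otherwise its weight becomes $w_{obj}$. If $I_p\ge1$, with $N^{split}_p=I_p+\mathbf 1_{\{u_p<R_p\}}$, the particle is replaced by $N^{split}_p$ copies each of weight $w_{obj}$. *)

theory Defs
  imports "HOL-Probability.Probability"
begin

definition wobj :: "real \<Rightarrow> real \<Rightarrow> nat \<Rightarrow> real" where
  "wobj E S Nobj = (E + S) / real Nobj"

definition Nvol :: "real \<Rightarrow> real \<Rightarrow> nat \<Rightarrow> nat" where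
  "Nvol E S Nobj = max 1 (nat \<lfloor>S / wobj E S Nobj\<rfloor>)"

definition rr_split :: "real \<Rightarrow> real \<Rightarrow> real \<Rightarrow> real list" where
  "rr_split wo u w =
     (let I = nat \<lfloor>w / wo\<rfloor>; R = w / wo - real I in
      if I = 0 then (if R < u then [] else [wo])
      else replicate (I + (if u < R then 1 else 0)) wo)"

text \<open>One iteration on the non-volumic population ws: particle number p uses the
  uniform draw us p; afterwards the non-volumic particles are rescaled by a common
  factor so that the total mass (volumic mass nv * (S/nv) included) is E + S; if no
  particle survives, the population is replaced by a single particle of weight E.\<close>
definition rr_step :: "real \<Rightarrow> real \<Rightarrow> real \<Rightarrow> nat \<Rightarrow> (nat \<Rightarrow> real) \<Rightarrow> real list \<Rightarrow> real list" where
  "rr_step wo E S nv us ws =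
     (let ws' = concat (map (\<lambda>(p, w). rr_split wo (us p) w) (zip [0..<length ws] ws))
      in if ws' = [] then [E]
         else map (\<lambda>x. x * ((E + S - real nv * (S / real nv)) / sum_list ws')) ws')"

text \<open>Non-volumic population after l iterations, driven by the draws u l p
  (iteration l, particle p).\<close>
primrec population :: "real \<Rightarrow> real \<Rightarrow> nat \<Rightarrow> real list \<Rightarrow> (nat \<Rightarrow> nat \<Rightarrow> real) \<Rightarrow> nat \<Rightarrow> real list" where
  "population E S Nobj ws0 u 0 = ws0"
| "population E S Nobj ws0 u (Suc l) =
     rr_step (wobj E S Nobj) E S (Nvol E S Nobj) (u l) (population E S Nobj ws0 u l)"

end

theory Submission
  imports Defs
begin

text \<open>Russian roulette and splitting only produce particles of weight \<open>w\<^sub>o\<^sub>b\<^sub>j\<close>, so after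
  rescaling, every population from the first iteration on consists of \<open>n\<close> equal weights
  \<open>E / n\<close>, with \<open>n\<close> bounded: the process lives on a finite set of populations. Under the
  hypotheses, \<open>E = K w\<^sub>o\<^sub>b\<^sub>j\<close> with \<open>K = N\<^sub>o\<^sub>b\<^sub>j - N\<^sup>v\<^sup>o\<^sup>l\<close>. Writing the weights of a population
  as \<open>w\<^sub>o\<^sub>b\<^sub>j (I\<^sub>p + R\<^sub>p)\<close>, the integer parts \<open>I\<^sub>p\<close> and fractional parts \<open>R\<^sub>p\<close> add up to \<open>K\<close>, so
  one may choose \<open>K - \<Sum> I\<^sub>p\<close> particles with \<open>R\<^sub>p > 0\<close> to be rounded up; with the positive
  probability that exactly these particles receive their extra copy, the next population
  is \<open>K\<close> particles of weight \<open>w\<^sub>o\<^sub>b\<^sub>j\<close>, which is absorbing. Minimising this probability over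
  the finitely many populations and using the independence of the draws of successive
  iterations, the probability of not being absorbed after \<open>l\<close> iterations is at most \<open>q\<^sup>l\<close>
  for some \<open>q < 1\<close>.\<close>

definition rr_count :: "real \<Rightarrow> (nat \<Rightarrow> real) \<Rightarrow> real list \<Rightarrow> nat" where
  "rr_count wo u ws = (\<Sum>p<length ws. length (rr_split wo (u p) (ws ! p)))"

definition equal_weights :: "real \<Rightarrow> nat \<Rightarrow> real list" where
  "equal_weights E n = (if n = 0 then [E] else replicate n (E / real n))"

lemma set_rr_split_subset: "set (rr_split wo u w) \<subseteq> {wo}"
  unfolding rr_split_def Let_def by auto

lemma length_rr_split_le: "length (rr_split wo u w) \<le> nat \<lfloor>w / wo\<rfloor> + 1"
  unfolding rr_split_def Let_def by auto

lemma length_rr_split: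
  assumes "0 \<le> w / wo" "u \<noteq> frac (w / wo)"
  shows "length (rr_split wo u w) = nat \<lfloor>w / wo\<rfloor> + (if u < frac (w / wo) then 1 else 0)"
proof -
  have R: "w / wo - real (nat \<lfloor>w / wo\<rfloor>) = frac (w / wo)" using assms(1) by (simp add: frac_def)
  show ?thesis using assms(2) unfolding rr_split_def Let_def R by auto
qed

lemma length_rr_split_le_ratio:
  assumes "0 \<le> w / wo"
  shows "real (length (rr_split wo u w)) \<le> w / wo + 1"
proof -
  have "real (nat \<lfloor>w / wo\<rfloor>) \<le> w / wo" using assms by linarith
  then show ?thesis using length_rr_split_le[of wo u w] by linarith
qed

lemma length_rr_split_le_max: "real (length (rr_split wo u w)) \<le> max 1 (2 * w / wo)"
proof (cases "nat \<lfloor>w / wo\<rfloor> = 0")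
  case True
  then show ?thesis unfolding rr_split_def Let_def by auto
next
  case False
  then have "real (nat \<lfloor>w / wo\<rfloor>) + 1 \<le> 2 * (w / wo)" by linarith
  then show ?thesis using length_rr_split_le[of wo u w] by linarith
qed

lemma measurable_length_rr_split[measurable]:
  assumes "u \<in> borel_measurable N"
  shows "(\<lambda>x. length (rr_split wo (u x) w)) \<in> measurable N (count_space UNIV)"
  using assms unfolding rr_split_def Let_def by (cases "nat \<lfloor>w / wo\<rfloor> = 0") simp_all

lemma measurable_rr_count[measurable]:
  assumes "\<And>p. V p \<in> borel_measurable N"
  shows "(\<lambda>x. rr_count wo (\<lambda>p. V p x) ws) \<in> measurable N (count_space UNIV)"
  unfolding rr_count_def by (measurable, rule assms)

lemma rr_step_eq_equal_weights:
  assumes "0 < wo" "0 < nv"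
  shows "rr_step wo E S nv us ws = equal_weights E (rr_count wo us ws)"
proof -
  let ?ws' = "concat (map (\<lambda>(p, w). rr_split wo (us p) w) (zip [0..<length ws] ws))"
  have "length ?ws' = rr_count wo us ws"
    unfolding rr_count_def length_concat by (simp add: sum_list_sum_nth atLeast0LessThan)
  moreover have "\<forall>y\<in>set ?ws'. y = wo" using set_rr_split_subset by fastforce
  ultimately have "?ws' = replicate (rr_count wo us ws) wo"
    using replicate_length_same by metis
  moreover have "E + S - real nv * (S / real nv) = E" using assms(2) by simp
  ultimately show ?thesis
    using assms(1) unfolding rr_step_def Let_def equal_weights_def by (auto simp: sum_list_replicate)
qed

lemma population_Suc_eq_equal_weights:
  assumes "0 < wobj E S Nobj"
  shows "population E S Nobj ws0 u (Suc l)
     = equal_weights E (rr_count (wobj E S Nobj) (u l) (population E S Nobj ws0 u l))"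
  using assms by (simp add: rr_step_eq_equal_weights Nvol_def)

lemma population_cong:
  "(\<And>j. j < l \<Longrightarrow> u j = u' j) \<Longrightarrow> population E S Nobj ws0 u l = population E S Nobj ws0 u' l"
  by (induction l) auto

lemma rr_count_le_sum_list:
  assumes "0 < wo" "\<forall>w\<in>set ws. 0 \<le> w"
  shows "real (rr_count wo u ws) \<le> sum_list ws / wo + length ws"
proof -
  have "real (rr_count wo u ws) \<le> (\<Sum>p<length ws. ws ! p / wo + 1)"
    unfolding rr_count_def of_nat_sum
    by (rule sum_mono) (use assms in \<open>auto intro!: length_rr_split_le_ratio\<close>)
  also have "\<dots> = sum_list ws / wo + length ws"
    by (simp add: sum.distrib sum_divide_distrib[symmetric] sum_list_sum_nth atLeast0LessThan)
  finally show ?thesis .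
qed

lemma rr_count_replicate_le:
  "real (rr_count wo u (replicate n c)) \<le> max (real n) (2 * real n * c / wo)"
proof -
  have "real (rr_count wo u (replicate n c)) \<le> (\<Sum>p<n. max 1 (2 * c / wo))"
    unfolding rr_count_def of_nat_sum length_replicate
    by (rule sum_mono) (simp add: length_rr_split_le_max)
  also have "\<dots> = max (real n) (2 * real n * c / wo)"
    by (simp add: max_mult_distrib_left mult.assoc mult.left_commute)
  finally show ?thesis .
qed

text \<open>If the weights sum to \<open>K wo\<close>, exactly \<open>K\<close> particles come out of roulette and
  splitting when the particles in \<open>rounded_up wo K ws\<close> receive their extra copy and the
  others do not; \<open>rounding_prob wo K ws\<close> is the probability of this event.\<close>

definition rounded_up :: "real \<Rightarrow> nat \<Rightarrow> real list \<Rightarrow> nat set" where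
  "rounded_up wo K ws = (SOME T. T \<subseteq> {p. p < length ws \<and> 0 < frac (ws ! p / wo)}
     \<and> card T = K - (\<Sum>p<length ws. nat \<lfloor>ws ! p / wo\<rfloor>))"

definition rounding_prob :: "real \<Rightarrow> nat \<Rightarrow> real list \<Rightarrow> real" where
  "rounding_prob wo K ws = (\<Prod>p<length ws.
     if p \<in> rounded_up wo K ws then frac (ws ! p / wo) else 1 - frac (ws ! p / wo))"

lemma sum_floor_add_sum_frac:
  assumes "0 < wo" "\<forall>w\<in>set ws. 0 \<le> w" "sum_list ws = real K * wo"
  shows "real (\<Sum>p<length ws. nat \<lfloor>ws ! p / wo\<rfloor>) + (\<Sum>p<length ws. frac (ws ! p / wo)) = real K"
proof -
  have "real (nat \<lfloor>ws ! p / wo\<rfloor>) + frac (ws ! p / wo) = ws ! p / wo" if "p < length ws" for p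
    using assms(1,2) nth_mem[OF that] by (simp add: frac_def)
  then have "real (\<Sum>p<length ws. nat \<lfloor>ws ! p / wo\<rfloor>) + (\<Sum>p<length ws. frac (ws ! p / wo))
      = (\<Sum>p<length ws. ws ! p / wo)"
    by (simp add: sum.distrib[symmetric])
  also have "\<dots> = real K"
    using assms(1,3) by (simp add: sum_divide_distrib[symmetric] sum_list_sum_nth atLeast0LessThan)
  finally show ?thesis .
qed

lemma rounded_up:
  assumes "0 < wo" "\<forall>w\<in>set ws. 0 \<le> w" "sum_list ws = real K * wo"
  shows "rounded_up wo K ws \<subseteq> {p. p < length ws \<and> 0 < frac (ws ! p / wo)}"
    and "card (rounded_up wo K ws) + (\<Sum>p<length ws. nat \<lfloor>ws ! p / wo\<rfloor>) = K"
proof -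
  let ?P = "{p. p < length ws \<and> 0 < frac (ws ! p / wo)}"
  let ?I = "\<Sum>p<length ws. nat \<lfloor>ws ! p / wo\<rfloor>"
  note sum_eq = sum_floor_add_sum_frac[OF assms]
  have "(\<Sum>p<length ws. frac (ws ! p / wo)) = (\<Sum>p\<in>?P. frac (ws ! p / wo))"
    by (rule sum.mono_neutral_right) (auto simp: less_le)
  also have "\<dots> \<le> (\<Sum>p\<in>?P. 1)"
    by (rule sum_mono) (simp add: less_imp_le frac_lt_1)
  finally have "real K \<le> real ?I + card ?P" using sum_eq by simp
  then have "K - ?I \<le> card ?P" by linarith
  then have "\<exists>T. T \<subseteq> ?P \<and> card T = K - ?I"
    by (meson obtain_subset_with_card_n)
  then have "rounded_up wo K ws \<subseteq> ?P \<and> card (rounded_up wo K ws) = K - ?I"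
    unfolding rounded_up_def by (rule someI_ex)
  moreover have "real ?I \<le> real K"
    using sum_eq sum_nonneg[of "{..<length ws}" "\<lambda>p. frac (ws ! p / wo)"] by fastforce
  ultimately show "rounded_up wo K ws \<subseteq> ?P" "card (rounded_up wo K ws) + ?I = K"
    by (simp_all only: of_nat_le_iff le_add_diff_inverse2)
qed

lemma rr_count_eq_if_rounded_up:
  assumes "0 < wo" "\<forall>w\<in>set ws. 0 \<le> w" "sum_list ws = real K * wo"
    and up: "\<And>p. p \<in> rounded_up wo K ws \<Longrightarrow> u p < frac (ws ! p / wo)"
    and down: "\<And>p. p < length ws \<Longrightarrow> p \<notin> rounded_up wo K ws \<Longrightarrow> frac (ws ! p / wo) < u p"
  shows "rr_count wo u ws = K"
proof -
  let ?T = "rounded_up wo K ws"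
  note T = rounded_up[OF assms(1-3)]
  have "rr_count wo u ws = (\<Sum>p<length ws. nat \<lfloor>ws ! p / wo\<rfloor> + (if p \<in> ?T then 1 else 0))"
    unfolding rr_count_def
  proof (rule sum.cong)
    fix p assume "p \<in> {..<length ws}"
    then have "0 \<le> ws ! p / wo" "u p \<noteq> frac (ws ! p / wo)"
      "u p < frac (ws ! p / wo) \<longleftrightarrow> p \<in> ?T"
      using assms(1,2) up[of p] down[of p] by force+
    then show "length (rr_split wo (u p) (ws ! p)) = nat \<lfloor>ws ! p / wo\<rfloor> + (if p \<in> ?T then 1 else 0)"
      by (simp add: length_rr_split)
  qed simp
  also have "\<dots> = (\<Sum>p<length ws. nat \<lfloor>ws ! p / wo\<rfloor>) + card ?T"
    using T(1) by (simp add: sum.distrib sum.If_cases Int_absorb1 subset_eq)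
  finally show ?thesis using T(2) by simp
qed

lemma rounding_prob_pos:
  assumes "0 < wo" "\<forall>w\<in>set ws. 0 \<le> w" "sum_list ws = real K * wo"
  shows "0 < rounding_prob wo K ws"
  unfolding rounding_prob_def
  by (rule prod_pos) (use rounded_up(1)[OF assms] frac_lt_1 in \<open>auto simp: less_diff_eq\<close>)

lemma rounding_prob_le_1: "rounding_prob wo K ws \<le> 1"
  unfolding rounding_prob_def by (rule prod_le_1) (auto simp: less_imp_le frac_lt_1)

lemma rounding_prob_replicate:
  assumes "0 < wo"
  shows "rounding_prob wo K (replicate K wo) = 1"
proof -
  have "rounded_up wo K (replicate K wo) = {}"
    using rounded_up(1)[OF assms, of "replicate K wo" K] assms by (auto simp: sum_list_replicate)
  then show ?thesis unfolding rounding_prob_def using assms by simp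
qed

locale rr_population =
  fixes E S :: real and Nobj K :: nat and ws0 :: "real list"
  assumes E_pos: "0 < E"
    and K_pos: "0 < K"
    and wobj_eq: "wobj E S Nobj = E / real K"
    and ws0_nonneg: "\<forall>w\<in>set ws0. 0 \<le> w"
    and sum_ws0: "sum_list ws0 = E"
begin

abbreviation wo :: real where "wo \<equiv> wobj E S Nobj"

lemma wobj_pos: "0 < wo"
  using E_pos K_pos by (simp add: wobj_eq)

definition reachable :: "real list set" where
  "reachable = insert ws0 (equal_weights E ` {..2 * K + length ws0})"

lemma finite_reachable: "finite reachable"
  unfolding reachable_def by simp

lemma reachable_weights:
  assumes "b \<in> reachable"
  shows "\<forall>w\<in>set b. 0 \<le> w" and "sum_list b = real K * wo"
  using assms E_pos K_pos ws0_nonneg sum_ws0 unfolding reachable_def equal_weights_def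
  by (auto simp: sum_list_replicate wobj_eq)

lemma equal_weights_target: "equal_weights E K = replicate K wo"
  using K_pos by (simp add: equal_weights_def wobj_eq)

lemma rr_count_reachable_le:
  assumes "b \<in> reachable"
  shows "rr_count wo u b \<le> 2 * K + length ws0"
proof -
  have "real (rr_count wo u b) \<le> 2 * real K + length ws0"
  proof (cases "b = ws0")
    case True
    then show ?thesis
      using rr_count_le_sum_list[OF wobj_pos ws0_nonneg, of u] sum_ws0 E_pos by (simp add: wobj_eq)
  next
    case False
    then obtain n where n: "n \<le> 2 * K + length ws0" "b = equal_weights E n"
      using assms unfolding reachable_def by auto
    show ?thesis
    proof (cases "n = 0")
      case True
      then show ?thesis
        using n rr_count_le_sum_list[OF wobj_pos, of b u] reachable_weights[OF assms] K_pos E_pos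
        by (simp add: equal_weights_def wobj_eq)
    next
      case False
      then show ?thesis
        using n E_pos rr_count_replicate_le[of wo u n "E / real n"] by (simp add: equal_weights_def wobj_eq)
    qed
  qed
  then show ?thesis by linarith
qed

lemma population_in_reachable: "population E S Nobj ws0 u l \<in> reachable"
proof (induction l)
  case 0
  then show ?case by (simp add: reachable_def)
next
  case (Suc l)
  then show ?case
    using rr_count_reachable_le[OF Suc] unfolding population_Suc_eq_equal_weights[OF wobj_pos]
    by (simp add: reachable_def)
qed

lemma measurable_equal_weights_rr_count:
  assumes "b \<in> reachable" "\<And>p. V p \<in> borel_measurable N"
  shows "(\<lambda>x. equal_weights E (rr_count wo (\<lambda>p. V p x) b)) \<in> measurable N (count_space reachable)"
proof -
  have "(\<lambda>x. rr_count wo (\<lambda>p. V p x) b) \<in> measurable N (count_space {..2 * K + length ws0})"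
    by (rule measurable_count_space_extend[OF subset_UNIV _ measurable_rr_count[OF assms(2)]])
      (use rr_count_reachable_le[OF assms(1)] in auto)
  moreover have "equal_weights E \<in> measurable (count_space {..2 * K + length ws0}) (count_space reachable)"
    unfolding measurable_count_space_eq1 reachable_def by auto
  ultimately show ?thesis by (rule measurable_compose)
qed

lemma measurable_population:
  assumes "\<And>j p. j < l \<Longrightarrow> V j p \<in> borel_measurable N"
  shows "(\<lambda>x. population E S Nobj ws0 (\<lambda>j p. V j p x) l) \<in> measurable N (count_space reachable)"
  using assms
proof (induction l)
  case 0
  then show ?case by (simp add: reachable_def)
next
  case (Suc l)
  show ?case
    unfolding population_Suc_eq_equal_weights[OF wobj_pos]
    by (rule measurable_compose_countable'[OF _ Suc.IH countable_finite[OF finite_reachable]])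
      (auto intro: measurable_equal_weights_rr_count Suc.prems)
qed

end

locale uniform_draws = prob_space M for M :: "'a measure" +
  fixes U :: "nat \<Rightarrow> nat \<Rightarrow> 'a \<Rightarrow> real"
  assumes indep_U: "indep_vars (\<lambda>_. borel) (\<lambda>i. U (fst i) (snd i)) UNIV"
    and distr_U: "\<And>l p. distr M borel (U l p) = uniform_measure lborel {0<..<1}"
begin

lemma measurable_U[measurable]: "U l p \<in> borel_measurable M"
  using indep_U unfolding indep_vars_def2 by (metis UNIV_I fst_conv snd_conv)

lemma prob_U_in:
  assumes "J \<in> sets borel" "J \<subseteq> {0<..<1}"
  shows "prob {\<omega> \<in> space M. U l p \<omega> \<in> J} = measure lborel J"
proof -
  have "prob {\<omega> \<in> space M. U l p \<omega> \<in> J} = measure (distr M borel (U l p)) J"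
    using assms(1) by (simp add: measure_distr vimage_def Int_def conj_commute)
  also have "\<dots> = measure lborel ({0<..<1} \<inter> J) / measure lborel {0<..<(1::real)}"
    using assms(1) by (simp add: distr_U)
  also have "\<dots> = measure lborel J" using assms(2) by (simp add: Int_absorb1)
  finally show ?thesis .
qed

lemma prob_row_all_in:
  assumes "\<And>p. J p \<in> sets borel"
  shows "prob {\<omega> \<in> space M. \<forall>p<n. U l p \<omega> \<in> J p} = (\<Prod>p<n. prob {\<omega> \<in> space M. U l p \<omega> \<in> J p})"
proof (cases "n = 0")
  case True
  then show ?thesis by (simp add: prob_space)
next
  case False
  have indep: "indep_sets (\<lambda>i. {U (fst i) (snd i) -` A \<inter> space M | A. A \<in> sets borel}) UNIV"
    using indep_U unfolding indep_vars_def2 by simp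
  define A where "A i = U (fst i) (snd i) -` J (snd i) \<inter> space M" for i
  have "prob (\<Inter>i\<in>Pair l ` {..<n}. A i) = (\<Prod>i\<in>Pair l ` {..<n}. prob (A i))"
    by (rule indep_setsD[OF indep]) (use False assms in \<open>auto simp: A_def\<close>)
  moreover have "(\<Inter>i\<in>Pair l ` {..<n}. A i) = {\<omega> \<in> space M. \<forall>p<n. U l p \<omega> \<in> J p}"
    using False by (auto simp: A_def)
  ultimately show ?thesis
    by (simp add: A_def prod.reindex inj_on_def vimage_def Int_def conj_commute)
qed

lemma prob_rr_count_eq_ge:
  assumes "0 < wo" "\<forall>w\<in>set ws. 0 \<le> w" "sum_list ws = real K * wo"
  shows "rounding_prob wo K ws \<le> prob {\<omega> \<in> space M. rr_count wo (\<lambda>p. U l p \<omega>) ws = K}"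
proof -
  let ?T = "rounded_up wo K ws"
  let ?f = "\<lambda>p. frac (ws ! p / wo)"
  define J where "J p = (if p \<in> ?T then {0<..<?f p} else {?f p<..<1})" for p
  have J_borel: "J p \<in> sets borel" for p
    by (simp add: J_def)
  have J_sub: "J p \<subseteq> {0<..<1}" for p
    by (auto simp: J_def intro: order.strict_trans1[OF frac_ge_0] order.strict_trans[OF _ frac_lt_1])
  have "rounding_prob wo K ws = (\<Prod>p<length ws. measure lborel (J p))"
    unfolding rounding_prob_def J_def
    by (intro prod.cong)
      (simp_all add: measure_lborel_Ioo[OF frac_ge_0] measure_lborel_Ioo[OF less_imp_le[OF frac_lt_1]])
  also have "\<dots> = prob {\<omega> \<in> space M. \<forall>p<length ws. U l p \<omega> \<in> J p}"
    by (simp add: prob_row_all_in[OF J_borel] prob_U_in[OF J_borel J_sub])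
  also have "\<dots> \<le> prob {\<omega> \<in> space M. rr_count wo (\<lambda>p. U l p \<omega>) ws = K}"
  proof (rule finite_measure_mono)
    show "{\<omega> \<in> space M. \<forall>p<length ws. U l p \<omega> \<in> J p}
        \<subseteq> {\<omega> \<in> space M. rr_count wo (\<lambda>p. U l p \<omega>) ws = K}"
      using rounded_up(1)[OF assms]
      by (auto simp: J_def subset_eq intro!: rr_count_eq_if_rounded_up[OF assms] split: if_splits)
  qed measurable
  finally show ?thesis .
qed

lemma prob_past_row_indep:
  assumes "A \<in> sets (\<Pi>\<^sub>M i\<in>{i. fst i < l}. borel)" "B \<in> sets (\<Pi>\<^sub>M i\<in>{i. fst i = l}. borel)"
  shows "prob {\<omega> \<in> space M. (\<lambda>i\<in>{i. fst i < l}. U (fst i) (snd i) \<omega>) \<in> A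
                            \<and> (\<lambda>i\<in>{i. fst i = l}. U (fst i) (snd i) \<omega>) \<in> B}
    = prob {\<omega> \<in> space M. (\<lambda>i\<in>{i. fst i < l}. U (fst i) (snd i) \<omega>) \<in> A}
      * prob {\<omega> \<in> space M. (\<lambda>i\<in>{i. fst i = l}. U (fst i) (snd i) \<omega>) \<in> B}"
proof -
  define I where "I c = (if c then {i :: nat \<times> nat. fst i < l} else {i. fst i = l})" for c
  define Y where "Y c \<omega> = (\<lambda>i\<in>I c. U (fst i) (snd i) \<omega>)" for c \<omega>
  have "indep_vars (\<lambda>c. \<Pi>\<^sub>M i\<in>I c. borel) Y UNIV"
    unfolding Y_def by (rule indep_vars_restrict[OF indep_U]) (auto simp: disjoint_family_on_def I_def)
  then have indep: "indep_sets (\<lambda>c. {Y c -` X \<inter> space M | X. X \<in> sets (\<Pi>\<^sub>M i\<in>I c. borel)}) UNIV"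
    unfolding indep_vars_def2 by simp
  define Z where "Z c = (if c then Y True -` A \<inter> space M else Y False -` B \<inter> space M)" for c
  have "prob (\<Inter>c. Z c) = (\<Prod>c\<in>UNIV. prob (Z c))"
    by (rule indep_setsD[OF indep]) (use assms in \<open>auto simp: Z_def I_def\<close>)
  moreover have "(\<Inter>c. Z c) = Z True \<inter> Z False"
    by (rule INF_UNIV_bool_expand)
  moreover have "Z True \<inter> Z False = {\<omega> \<in> space M. (\<lambda>i\<in>{i. fst i < l}. U (fst i) (snd i) \<omega>) \<in> A
                            \<and> (\<lambda>i\<in>{i. fst i = l}. U (fst i) (snd i) \<omega>) \<in> B}"
    "Z True = {\<omega> \<in> space M. (\<lambda>i\<in>{i. fst i < l}. U (fst i) (snd i) \<omega>) \<in> A}"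
    "Z False = {\<omega> \<in> space M. (\<lambda>i\<in>{i. fst i = l}. U (fst i) (snd i) \<omega>) \<in> B}"
    by (auto simp: Z_def Y_def I_def)
  ultimately show ?thesis by (simp add: UNIV_bool)
qed

end

locale rr_process = rr_population E S Nobj K ws0 + uniform_draws M U
  for E S Nobj K ws0 and M :: "'a measure" and U
begin

abbreviation pop :: "nat \<Rightarrow> 'a \<Rightarrow> real list" where
  "pop l \<omega> \<equiv> population E S Nobj ws0 (\<lambda>j p. U j p \<omega>) l"

lemma measurable_pop: "(\<lambda>\<omega>. pop l \<omega>) \<in> measurable M (count_space reachable)"
  by (rule measurable_population) simp

lemma pop_events[measurable]: "{\<omega> \<in> space M. P (pop l \<omega>)} \<in> events"
proof -
  have "{\<omega> \<in> space M. P (pop l \<omega>)} = (\<lambda>\<omega>. pop l \<omega>) -` {b \<in> reachable. P b} \<inter> space M"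
    using population_in_reachable by auto
  also have "\<dots> \<in> events"
    by (rule measurable_sets[OF measurable_pop]) auto
  finally show ?thesis .
qed

lemma prob_pop_eq_rr_count_ne:
  "prob {\<omega> \<in> space M. pop l \<omega> = b \<and> rr_count wo (\<lambda>p. U l p \<omega>) b \<noteq> K}
     = prob {\<omega> \<in> space M. pop l \<omega> = b} * prob {\<omega> \<in> space M. rr_count wo (\<lambda>p. U l p \<omega>) b \<noteq> K}"
proof -
  let ?past = "\<lambda>\<omega>. \<lambda>i\<in>{i. fst i < l}. U (fst i) (snd i) \<omega>"
  let ?row = "\<lambda>\<omega>. \<lambda>i\<in>{i. fst i = l}. U (fst i) (snd i) \<omega>"
  define A where "A = {y \<in> space (\<Pi>\<^sub>M i\<in>{i. fst i < l}. borel).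
    population E S Nobj ws0 (\<lambda>j p. y (j, p)) l = b}"
  define B where "B = {y \<in> space (\<Pi>\<^sub>M i\<in>{i. fst i = l}. borel).
    rr_count wo (\<lambda>p. y (l, p)) b \<noteq> K}"
  have "(\<lambda>y. population E S Nobj ws0 (\<lambda>j p. y (j, p)) l)
      \<in> measurable (\<Pi>\<^sub>M i\<in>{i. fst i < l}. borel) (count_space reachable)"
    by (rule measurable_population) simp
  then have A: "A \<in> sets (\<Pi>\<^sub>M i\<in>{i. fst i < l}. borel)"
    unfolding A_def by measurable
  have B: "B \<in> sets (\<Pi>\<^sub>M i\<in>{i. fst i = l}. borel)"
    unfolding B_def by measurable
  have "pop l \<omega> = population E S Nobj ws0 (\<lambda>j p. ?past \<omega> (j, p)) l" for \<omega>
    by (rule population_cong) auto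
  then have "{\<omega> \<in> space M. pop l \<omega> = b \<and> rr_count wo (\<lambda>p. U l p \<omega>) b \<noteq> K}
      = {\<omega> \<in> space M. ?past \<omega> \<in> A \<and> ?row \<omega> \<in> B}"
    "{\<omega> \<in> space M. pop l \<omega> = b} = {\<omega> \<in> space M. ?past \<omega> \<in> A}"
    "{\<omega> \<in> space M. rr_count wo (\<lambda>p. U l p \<omega>) b \<noteq> K} = {\<omega> \<in> space M. ?row \<omega> \<in> B}"
    by (auto simp: A_def B_def space_PiM)
  then show ?thesis
    by (simp only: prob_past_row_indep[OF A B])
qed

definition miss_bound :: real where
  "miss_bound = Max ((\<lambda>b. 1 - rounding_prob wo K b) ` reachable)"

lemma miss_bound_nonneg: "0 \<le> miss_bound"
proof -
  have "1 - rounding_prob wo K ws0 \<le> miss_bound"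
    unfolding miss_bound_def using finite_reachable by (intro Max_ge) (auto simp: reachable_def)
  then show ?thesis using rounding_prob_le_1[of wo K ws0] by linarith
qed

lemma miss_bound_less_1: "miss_bound < 1"
  unfolding miss_bound_def using finite_reachable
  by (subst Max_less_iff)
    (auto simp: reachable_def rounding_prob_pos[OF wobj_pos reachable_weights])

lemma prob_rr_count_ne_le:
  assumes "b \<in> reachable"
  shows "prob {\<omega> \<in> space M. rr_count wo (\<lambda>p. U l p \<omega>) b \<noteq> K}
    \<le> (if b = equal_weights E K then 0 else miss_bound)"
proof -
  have "prob {\<omega> \<in> space M. rr_count wo (\<lambda>p. U l p \<omega>) b \<noteq> K}
      = 1 - prob {\<omega> \<in> space M. rr_count wo (\<lambda>p. U l p \<omega>) b = K}"
    by (subst prob_compl[symmetric]) (auto intro!: arg_cong[where f = prob])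
  also have "\<dots> \<le> 1 - rounding_prob wo K b"
    using prob_rr_count_eq_ge[OF wobj_pos reachable_weights[OF assms]] by simp
  also have "\<dots> \<le> (if b = equal_weights E K then 0 else miss_bound)"
    using assms finite_reachable
    by (auto simp: equal_weights_target rounding_prob_replicate[OF wobj_pos] miss_bound_def)
  finally show ?thesis .
qed

lemma prob_pop_ne_target_Suc_le:
  "prob {\<omega> \<in> space M. pop (Suc l) \<omega> \<noteq> equal_weights E K}
     \<le> miss_bound * prob {\<omega> \<in> space M. pop l \<omega> \<noteq> equal_weights E K}"
proof -
  let ?t = "equal_weights E K"
  let ?miss = "\<lambda>b \<omega>. rr_count wo (\<lambda>p. U l p \<omega>) b \<noteq> K"
  have "(\<lambda>\<omega>. rr_count wo (\<lambda>p. U l p \<omega>) (pop l \<omega>)) \<in> measurable M (count_space UNIV)"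
    by (rule measurable_compose_countable'[where f = "\<lambda>b \<omega>. rr_count wo (\<lambda>p. U l p \<omega>) b",
          OF _ measurable_pop countable_finite[OF finite_reachable]]) simp
  from measurable_sets[OF this, of "- {K}"]
  have miss_events: "{\<omega> \<in> space M. ?miss (pop l \<omega>) \<omega>} \<in> events"
    by (simp add: vimage_def Int_def conj_commute)
  then have "prob {\<omega> \<in> space M. pop (Suc l) \<omega> \<noteq> ?t} \<le> prob {\<omega> \<in> space M. ?miss (pop l \<omega>) \<omega>}"
    unfolding population_Suc_eq_equal_weights[OF wobj_pos] by (intro finite_measure_mono) auto
  also have "\<dots> = (\<Sum>b\<in>reachable. prob {\<omega> \<in> space M. pop l \<omega> = b \<and> ?miss b \<omega>})"
    using finite_reachable population_in_reachable miss_events by (intro prob_sum) auto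
  also have "\<dots> \<le> (\<Sum>b\<in>reachable. prob {\<omega> \<in> space M. pop l \<omega> = b} * (if b = ?t then 0 else miss_bound))"
    unfolding prob_pop_eq_rr_count_ne
    by (intro sum_mono mult_left_mono prob_rr_count_ne_le) auto
  also have "\<dots> = miss_bound * (\<Sum>b\<in>reachable - {?t}. prob {\<omega> \<in> space M. pop l \<omega> = b})"
    unfolding sum_distrib_left using finite_reachable by (intro sum.mono_neutral_cong_right) auto
  also have "(\<Sum>b\<in>reachable - {?t}. prob {\<omega> \<in> space M. pop l \<omega> = b})
      = prob {\<omega> \<in> space M. pop l \<omega> \<noteq> ?t}"
    using finite_reachable population_in_reachable by (intro prob_sum[symmetric]) auto
  finally show ?thesis .
qed

lemma prob_pop_ne_target_le:
  "prob {\<omega> \<in> space M. pop l \<omega> \<noteq> equal_weights E K} \<le> miss_bound ^ l"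
proof (induction l)
  case (Suc l)
  then show ?case
    using prob_pop_ne_target_Suc_le[of l] miss_bound_nonneg
    by (simp add: order_trans mult_left_mono)
qed simp

lemma prob_length_pop_ne_le: "prob {\<omega> \<in> space M. length (pop l \<omega>) \<noteq> K} \<le> miss_bound ^ l"
proof -
  have "{\<omega> \<in> space M. length (pop l \<omega>) \<noteq> K} \<subseteq> {\<omega> \<in> space M. pop l \<omega> \<noteq> equal_weights E K}"
    using K_pos by (auto simp: equal_weights_def)
  then have "prob {\<omega> \<in> space M. length (pop l \<omega>) \<noteq> K}
      \<le> prob {\<omega> \<in> space M. pop l \<omega> \<noteq> equal_weights E K}"
    by (rule finite_measure_mono[OF _ pop_events])
  then show ?thesis using prob_pop_ne_target_le[of l] by linarith
qed

end

lemma (in prob_space) geometric_decay: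
  assumes events: "\<And>l. A l \<in> events" and bound: "\<And>l. prob (A l) \<le> q ^ l" and "q < 1"
  shows "(\<lambda>l. prob (space M - A l)) \<longlonglongrightarrow> 1"
    and "\<exists>c>0. \<forall>l. prob (A l) \<le> exp (- (real l * c))"
proof -
  have "0 \<le> q" using bound[of 1] measure_nonneg[of M "A 1"] by (simp only: power_one_right)
  have "(\<lambda>l. prob (A l)) \<longlonglongrightarrow> 0"
    using \<open>0 \<le> q\<close> \<open>q < 1\<close> bound
    by (intro tendsto_sandwich[OF _ _ tendsto_const LIMSEQ_power_zero[of q]]) auto
  then have "(\<lambda>l. 1 - prob (A l)) \<longlonglongrightarrow> 1 - 0"
    by (intro tendsto_diff tendsto_const)
  then show "(\<lambda>l. prob (space M - A l)) \<longlonglongrightarrow> 1"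
    by (simp add: prob_compl events)
  define r where "r = max q (1 / 2)"
  have "0 < r" "r < 1" using \<open>q < 1\<close> by (auto simp: r_def)
  have "prob (A l) \<le> exp (- (real l * - ln r))" for l
  proof -
    have "prob (A l) \<le> r ^ l"
      using bound[of l] power_mono[of q r l] \<open>0 \<le> q\<close> by (simp add: r_def)
    also have "\<dots> = exp (- (real l * - ln r))"
      using \<open>0 < r\<close> by (simp add: exp_of_nat_mult)
    finally show ?thesis .
  qed
  moreover have "0 < - ln r" using \<open>0 < r\<close> \<open>r < 1\<close> by simp
  ultimately show "\<exists>c>0. \<forall>l. prob (A l) \<le> exp (- (real l * c))" by blast
qed

lemma Nvol_less_and_wobj_eq:
  assumes "0 < E" "0 < S" "0 < Nobj" "S * real Nobj / (E + S) \<in> \<nat>"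
  shows "Nvol E S Nobj < Nobj" and "wobj E S Nobj = E / real (Nobj - Nvol E S Nobj)"
proof -
  define w where "w = wobj E S Nobj"
  obtain m :: nat where m: "S * real Nobj / (E + S) = real m"
    using assms(4) by (auto elim: Nats_cases)
  have w: "0 < w" "E + S = real Nobj * w" using assms by (simp_all add: w_def wobj_def)
  have "S / w = real m" using m assms by (simp add: w_def wobj_def field_simps)
  moreover have "0 < real m" unfolding m[symmetric] using assms by simp
  ultimately have Nvol: "Nvol E S Nobj = m" by (simp add: Nvol_def w_def)
  have "S = real m * w" using \<open>S / w = real m\<close> w(1) by (simp add: field_simps)
  then have E: "E = (real Nobj - real m) * w" using w(2) by (simp add: algebra_simps)
  then have "m < Nobj" using assms(1) w(1) by (simp add: zero_less_mult_iff)
  then show "Nvol E S Nobj < Nobj" by (simp add: Nvol)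
  have "w = E / real (Nobj - m)" using E \<open>m < Nobj\<close> by (simp add: of_nat_diff)
  then show "wobj E S Nobj = E / real (Nobj - Nvol E S Nobj)" by (simp add: w_def Nvol)
qed

theorem proposition3:
  fixes M :: "'a measure" and U :: "nat \<Rightarrow> nat \<Rightarrow> 'a \<Rightarrow> real"
    and E S :: real and Nobj :: nat and ws0 :: "real list"
  assumes "prob_space M"
    and indep: "prob_space.indep_vars M (\<lambda>_. borel) (\<lambda>i. U (fst i) (snd i)) UNIV"
    and unif: "\<And>l p. distr M borel (U l p) = uniform_measure lborel {0<..<1}"
    and "E > 0" and "S > 0" and "Nobj > 0"
    and pos: "\<forall>w\<in>set ws0. w > 0" and sum: "sum_list ws0 = E"
    and "S * real Nobj / (E + S) \<in> \<nat>"
    and "Nvol E S Nobj > 1"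
  shows "(\<forall>l. {\<omega> \<in> space M. Nvol E S Nobj + length (population E S Nobj ws0 (\<lambda>l p. U l p \<omega>) l) \<noteq> Nobj} \<in> sets M)
    \<and> ((\<lambda>l. measure M {\<omega> \<in> space M. Nvol E S Nobj + length (population E S Nobj ws0 (\<lambda>l p. U l p \<omega>) l) = Nobj}) \<longlonglongrightarrow> 1)
    \<and> (\<exists>c>0. \<forall>l. measure M {\<omega> \<in> space M. Nvol E S Nobj + length (population E S Nobj ws0 (\<lambda>l p. U l p \<omega>) l) \<noteq> Nobj}
                 \<le> exp (- (real l * c)))"
proof -
  define K where "K = Nobj - Nvol E S Nobj"
  note Nvol = Nvol_less_and_wobj_eq[OF assms(4-6,9)]
  interpret uniform_draws M U
    by (intro uniform_draws.intro uniform_draws_axioms.intro assms(1) indep unif)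
  interpret rr_population E S Nobj K ws0
  proof
    show "0 < K" using Nvol(1) by (simp add: K_def)
    show "wobj E S Nobj = E / real K" using Nvol(2) by (simp add: K_def)
  qed (use assms(4) pos sum in auto)
  interpret rr_process E S Nobj K ws0 M U ..
  note decay = geometric_decay[where A = "\<lambda>l. {\<omega> \<in> space M. length (pop l \<omega>) \<noteq> K}",
      OF pop_events prob_length_pop_ne_le miss_bound_less_1]
  have bad: "{\<omega> \<in> space M. Nvol E S Nobj + length (pop l \<omega>) \<noteq> Nobj}
      = {\<omega> \<in> space M. length (pop l \<omega>) \<noteq> K}" for l
    using Nvol(1) by (auto simp: K_def)
  have good: "{\<omega> \<in> space M. Nvol E S Nobj + length (pop l \<omega>) = Nobj}
      = space M - {\<omega> \<in> space M. length (pop l \<omega>) \<noteq> K}" for l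
    using Nvol(1) by (auto simp: K_def)
  show ?thesis
    unfolding bad good by (intro conjI allI pop_events decay)
qed

end
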